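(* Let $m\ge1$ and let $n$ be even. Let $P=\bigoplus_{i=1}^n\mathbf{m}$ be the ordinal sum of $n$ antichains each of size $m$. Then the signed cardinality statistic $SC$ is homomesic under rowmotion on $\mathcal{IC}(P)$, with average $0$ on every orbit.
   Context: For posets $P,Q$, the ordinal sum $P\oplus Q$ has underlying set the disjoint union of $P$ and $Q$, with $x\le y$ iff $x\le_P y$, or $x\le_Q y$, or $x\in P$ and $y\in Q$. $\mathbf{m}$ is an $m$-element antichain. $P=\bigoplus_{i=1}^n\mathbf{m}$ is ranked with the elements of the $i$-th summand (counted from the bottom) having rank $i-1$. A subset $I\subseteq P$ is interval-closed if for all $x,y\in I$ and $z\in P$ with $x\le z\le y$ we have $z\in I$; $\mathcal{IC}(P)$ is the set of interval-closed subsets. For $x\in P$ the toggle $t_x$ sends $I$ to $I\triangle\{x\}$ if that is interval-closed and to $I$ otherwise. Rowmotion is $\mathrm{Row}=t_{x_1}\circ\cdots\circ t_{x_N}$, where $(x_1,\dots,x_N)$ is a linear extension of $P$ (toggling from the top down). $SC(x)=1$ if $\mathrm{rk}(x)$ is even and $-1$ if odd, and $SC(I)=\sum_{x\in I}SC(x)$. A statistic is homomesic ($c$-mesic) if its average over every rowmotion orbit equals the same constant $c$. *)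

theory Defs
  imports Complex_Main
begin

definition interval_closed :: "'a set \<Rightarrow> ('a \<Rightarrow> 'a \<Rightarrow> bool) \<Rightarrow> 'a set \<Rightarrow> bool" where
  "interval_closed P le I \<longleftrightarrow> I \<subseteq> P \<and>
     (\<forall>x\<in>I. \<forall>y\<in>I. \<forall>z\<in>P. le x z \<and> le z y \<longrightarrow> z \<in> I)"

definition IC :: "'a set \<Rightarrow> ('a \<Rightarrow> 'a \<Rightarrow> bool) \<Rightarrow> 'a set set" where
  "IC P le = {I. interval_closed P le I}"

definition toggle :: "'a set \<Rightarrow> ('a \<Rightarrow> 'a \<Rightarrow> bool) \<Rightarrow> 'a \<Rightarrow> 'a set \<Rightarrow> 'a set" where
  "toggle P le x I =
     (let J = (I - {x}) \<union> ({x} - I) in if interval_closed P le J then J else I)"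

text \<open>A linear extension, listed from bottom to top.\<close>
definition linear_extension :: "'a set \<Rightarrow> ('a \<Rightarrow> 'a \<Rightarrow> bool) \<Rightarrow> 'a list \<Rightarrow> bool" where
  "linear_extension P le xs \<longleftrightarrow> distinct xs \<and> set xs = P \<and>
     (\<forall>i<length xs. \<forall>j<length xs. le (xs ! i) (xs ! j) \<longrightarrow> i \<le> j)"

text \<open>Row = t_{x_1} \<circ> ... \<circ> t_{x_N} (toggling from the top down).\<close>
definition rowmotion :: "'a set \<Rightarrow> ('a \<Rightarrow> 'a \<Rightarrow> bool) \<Rightarrow> 'a list \<Rightarrow> 'a set \<Rightarrow> 'a set" where
  "rowmotion P le xs = foldr (\<lambda>x f. toggle P le x \<circ> f) xs id"

definition orbit :: "('b \<Rightarrow> 'b) \<Rightarrow> 'b \<Rightarrow> 'b set" where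
  "orbit f I = {(f ^^ k) I | k. True}"

definition homomesic :: "'b set \<Rightarrow> ('b \<Rightarrow> 'b) \<Rightarrow> ('b \<Rightarrow> real) \<Rightarrow> real \<Rightarrow> bool" where
  "homomesic S f stat c \<longleftrightarrow>
     (\<forall>I\<in>S. (\<Sum>J\<in>orbit f I. stat J) / real (card (orbit f I)) = c)"

text \<open>The ordinal sum of n antichains of size m: element (i,j) is the j-th element
  of the (i+1)-th summand from the bottom, so it has rank i.\<close>
definition ordsum_antichains :: "nat \<Rightarrow> nat \<Rightarrow> (nat \<times> nat) set" where
  "ordsum_antichains n m = {0..<n} \<times> {0..<m}"

definition ordsum_le :: "nat \<times> nat \<Rightarrow> nat \<times> nat \<Rightarrow> bool" where
  "ordsum_le x y \<longleftrightarrow> x = y \<or> fst x < fst y"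

definition rk :: "nat \<times> nat \<Rightarrow> nat" where
  "rk x = fst x"

definition SC_elem :: "nat \<times> nat \<Rightarrow> int" where
  "SC_elem x = (if even (rk x) then 1 else -1)"

definition SC :: "(nat \<times> nat) set \<Rightarrow> int" where
  "SC I = (\<Sum>x\<in>I. SC_elem x)"

end

theory Submission
  imports Defs
begin

text \<open>An interval-closed set I with lowest rank lo contains every element strictly between its
  lowest and highest ranks. Toggling from the top down, rowmotion can be computed explicitly. Let t
  be the least rank above lo that is not contained in I. If there is none (in particular if I is
  empty, taking lo = n), Row I consists of the ranks below lo and the complement of I in rank lo,
  so Row I and I partition P. Otherwise Row I consists of the complements of I in ranks lo and t
  together with the ranks strictly between, so the union of Row I and I is the block of ranks
  from lo to t and their intersection the block strictly between. Either way SC (Row I) + SC I is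
  an alternating sum of multiples of m that vanishes (for n even in the first case). Since
  rowmotion is a bijection of IC(P), the sum of SC over an orbit equals its own negative.\<close>

lemma toggle_in_IC: "I \<in> IC P le \<Longrightarrow> toggle P le x I \<in> IC P le"
  by (simp add: toggle_def IC_def Let_def)

lemma toggle_toggle: "I \<in> IC P le \<Longrightarrow> toggle P le x (toggle P le x I) = I"
proof -
  assume "I \<in> IC P le"
  moreover have "(I - {x} \<union> ({x} - I)) - {x} \<union> ({x} - (I - {x} \<union> ({x} - I))) = I"
    by auto
  ultimately show ?thesis
    by (simp add: toggle_def Let_def IC_def)
qed

lemma mem_toggle_other: "y \<noteq> x \<Longrightarrow> y \<in> toggle P le x J \<longleftrightarrow> y \<in> J"
  by (auto simp: toggle_def Let_def)

lemma rowmotion_eq_foldr: "rowmotion P le xs I = foldr (toggle P le) xs I"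
  unfolding rowmotion_def by (induction xs) auto

lemma foldr_toggle_in_IC: "I \<in> IC P le \<Longrightarrow> foldr (toggle P le) xs I \<in> IC P le"
  by (induction xs) (auto intro: toggle_in_IC)

lemma inj_on_foldr_toggle: "inj_on (foldr (toggle P le) xs) (IC P le)"
proof (induction xs)
  case (Cons x xs)
  have "inj_on (toggle P le x) (IC P le)"
    by (rule inj_on_inverseI) (rule toggle_toggle)
  moreover have "foldr (toggle P le) xs ` IC P le \<subseteq> IC P le"
    using foldr_toggle_in_IC by blast
  ultimately show ?case
    unfolding foldr_Cons using Cons.IH comp_inj_on inj_on_subset by metis
qed simp

lemma mem_foldr_toggle_notin: "y \<notin> set xs \<Longrightarrow> y \<in> foldr (toggle P le) xs I \<longleftrightarrow> y \<in> I"
  by (induction xs) (auto simp: mem_toggle_other)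

lemma orbit_subset: "f ` S \<subseteq> S \<Longrightarrow> I \<in> S \<Longrightarrow> orbit f I \<subseteq> S"
proof -
  assume "f ` S \<subseteq> S" "I \<in> S"
  then have "(f ^^ k) I \<in> S" for k
    by (induction k) auto
  then show ?thesis
    by (auto simp: orbit_def)
qed

lemma sum_orbit_comp:
  assumes "finite S" "f ` S \<subseteq> S" "inj_on f S" "I \<in> S"
  shows "(\<Sum>J\<in>orbit f I. g (f J)) = (\<Sum>J\<in>orbit f I. g J)"
proof -
  have sub: "orbit f I \<subseteq> S"
    using assms orbit_subset by metis
  have "f ` orbit f I \<subseteq> orbit f I"
    by (auto simp: orbit_def simp flip: funpow.simps(2) comp_apply[of f "f ^^ _"])
  then have "f ` orbit f I = orbit f I"
    using endo_inj_surj assms sub finite_subset inj_on_subset by metis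
  then show ?thesis
    using sum.reindex[of f "orbit f I" g] assms(3) sub inj_on_subset by fastforce
qed

lemma homomesic_0_if_sign_reversing:
  fixes stat :: "'b \<Rightarrow> real"
  assumes "finite S" "f ` S \<subseteq> S" "inj_on f S" "\<And>J. J \<in> S \<Longrightarrow> stat (f J) = - stat J"
  shows "homomesic S f stat 0"
  unfolding homomesic_def
proof
  fix I assume "I \<in> S"
  have "(\<Sum>J\<in>orbit f I. stat J) = (\<Sum>J\<in>orbit f I. stat (f J))"
    using sum_orbit_comp[OF assms(1-3) \<open>I \<in> S\<close>, of stat] by simp
  also have "\<dots> = (\<Sum>J\<in>orbit f I. - stat J)"
    using orbit_subset[OF assms(2) \<open>I \<in> S\<close>] assms(4) by (intro sum.cong) auto
  finally show "(\<Sum>J\<in>orbit f I. stat J) / real (card (orbit f I)) = 0"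
    by (simp add: sum_negf)
qed

lemma nth_in_set_drop_iff:
  assumes "distinct xs" "j < length xs"
  shows "xs ! j \<in> set (drop k xs) \<longleftrightarrow> k \<le> j"
  using assms by (auto simp: in_set_conv_nth nth_eq_iff_index_eq intro!: exI[of _ "j - k"])

lemma mem_foldr_toggle_drop:
  assumes "distinct xs" "j < length xs"
  shows "xs ! j \<in> foldr (toggle P le) (drop k xs) I \<longleftrightarrow>
    xs ! j \<in> (if j < k then I else foldr (toggle P le) (drop j xs) I)"
proof (cases "j < k")
  case True
  then show ?thesis
    using assms nth_in_set_drop_iff mem_foldr_toggle_notin by (metis not_le)
next
  case False
  let ?ys = "drop k xs"
  have split: "?ys = take (j - k) ?ys @ drop j xs"
    using False by (metis append_take_drop_id drop_drop le_add_diff_inverse2 not_less)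
  moreover have "xs ! j \<in> set (drop j xs)"
    using assms nth_in_set_drop_iff by blast
  moreover have "set (take (j - k) ?ys) \<inter> set (drop j xs) = {}"
    using distinct_drop[OF assms(1), of k] split by (metis distinct_append)
  ultimately have "xs ! j \<notin> set (take (j - k) ?ys)"
    by blast
  then show ?thesis
    using False by (subst split) (simp add: mem_foldr_toggle_notin)
qed

lemma interval_closed_ordsum_iff:
  "interval_closed P ordsum_le I \<longleftrightarrow> I \<subseteq> P \<and>
     (\<forall>x\<in>I. \<forall>y\<in>I. \<forall>z\<in>P. fst x < fst z \<and> fst z < fst y \<longrightarrow> z \<in> I)"
  unfolding interval_closed_def ordsum_le_def by blast

definition in_after_toggle :: "(nat \<times> nat) set \<Rightarrow> (nat \<times> nat) set \<Rightarrow> nat \<times> nat \<Rightarrow> bool" where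
  "in_after_toggle P J x =
     (if x \<in> J then \<exists>a\<in>J. \<exists>b\<in>J. fst a < fst x \<and> fst x < fst b
      else \<forall>b\<in>J. \<forall>z\<in>P. fst x < fst z \<and> fst z < fst b \<or> fst b < fst z \<and> fst z < fst x \<longrightarrow> z \<in> J)"

lemma in_after_toggle_mem_iff:
  "x \<in> J \<Longrightarrow> in_after_toggle P J x \<longleftrightarrow> (\<exists>a\<in>J. fst a < fst x) \<and> (\<exists>b\<in>J. fst x < fst b)"
  unfolding in_after_toggle_def by auto

lemma in_after_toggle_nonmem_iff:
  "x \<notin> J \<Longrightarrow> in_after_toggle P J x \<longleftrightarrow>
    (\<forall>b\<in>J. \<forall>z\<in>P. fst x < fst z \<and> fst z < fst b \<or> fst b < fst z \<and> fst z < fst x \<longrightarrow> z \<in> J)"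
  unfolding in_after_toggle_def by simp

lemma not_in_after_toggle_gap:
  assumes "x \<notin> J" "b \<in> J" "z \<in> P" "z \<notin> J"
    and "fst x < fst z \<and> fst z < fst b \<or> fst b < fst z \<and> fst z < fst x"
  shows "\<not> in_after_toggle P J x"
  using assms unfolding in_after_toggle_def by auto

lemma not_in_after_toggle_extremal:
  assumes "x \<in> J" "(\<forall>b\<in>J. fst b \<le> fst x) \<or> (\<forall>a\<in>J. fst x \<le> fst a)"
  shows "\<not> in_after_toggle P J x"
  using assms by (auto simp: in_after_toggle_mem_iff not_less)

lemma interval_closed_remove_iff:
  assumes "J \<in> IC P ordsum_le" "x \<in> J" "x \<in> P"
  shows "interval_closed P ordsum_le (J - {x}) \<longleftrightarrow> \<not> in_after_toggle P J x"
proof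
  assume closed: "interval_closed P ordsum_le (J - {x})"
  show "\<not> in_after_toggle P J x"
  proof
    assume "in_after_toggle P J x"
    then obtain a b where "a \<in> J" "b \<in> J" "fst a < fst x" "fst x < fst b"
      using \<open>x \<in> J\<close> by (auto simp: in_after_toggle_mem_iff)
    then have "a \<in> J - {x}" "b \<in> J - {x}"
      by auto
    then have "x \<in> J - {x}"
      using closed \<open>x \<in> P\<close> \<open>fst a < fst x\<close> \<open>fst x < fst b\<close>
      unfolding interval_closed_ordsum_iff by blast
    then show False
      by simp
  qed
next
  assume kept: "\<not> in_after_toggle P J x"
  have JP: "J \<subseteq> P"
    and J_closed: "\<And>a b z. a \<in> J \<Longrightarrow> b \<in> J \<Longrightarrow> z \<in> P \<Longrightarrow> fst a < fst z \<Longrightarrow> fst z < fst b \<Longrightarrow> z \<in> J"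
    using assms(1) unfolding IC_def interval_closed_ordsum_iff by blast+
  show "interval_closed P ordsum_le (J - {x})"
    unfolding interval_closed_ordsum_iff
  proof (intro conjI ballI impI)
    show "J - {x} \<subseteq> P"
      using JP by blast
    fix a b z
    assume "a \<in> J - {x}" "b \<in> J - {x}" "z \<in> P" "fst a < fst z \<and> fst z < fst b"
    moreover from this kept \<open>x \<in> J\<close> have "z \<noteq> x"
      unfolding in_after_toggle_def by auto
    ultimately show "z \<in> J - {x}"
      using J_closed by blast
  qed
qed
lemma interval_closed_insert_iff:
  assumes "J \<in> IC P ordsum_le" "x \<notin> J" "x \<in> P"
  shows "interval_closed P ordsum_le (insert x J) \<longleftrightarrow> in_after_toggle P J x"
proof
  assume closed: "interval_closed P ordsum_le (insert x J)"
  have "z \<in> J" if "b \<in> J" "z \<in> P"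
    and between: "fst x < fst z \<and> fst z < fst b \<or> fst b < fst z \<and> fst z < fst x" for b z
  proof -
    have "z \<in> insert x J"
      using between
    proof
      assume "fst x < fst z \<and> fst z < fst b"
      then show ?thesis
        using closed that(1,2) unfolding interval_closed_ordsum_iff by blast
    next
      assume "fst b < fst z \<and> fst z < fst x"
      then show ?thesis
        using closed that(1,2) unfolding interval_closed_ordsum_iff by blast
    qed
    then show "z \<in> J"
      using between by auto
  qed
  then show "in_after_toggle P J x"
    unfolding in_after_toggle_nonmem_iff[OF \<open>x \<notin> J\<close>] by blast
next
  assume "in_after_toggle P J x"
  then have added: "\<And>b z. b \<in> J \<Longrightarrow> z \<in> P \<Longrightarrow>
      fst x < fst z \<and> fst z < fst b \<or> fst b < fst z \<and> fst z < fst x \<Longrightarrow> z \<in> J"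
    unfolding in_after_toggle_nonmem_iff[OF \<open>x \<notin> J\<close>] by blast
  have JP: "J \<subseteq> P"
    and J_closed: "\<And>a b z. a \<in> J \<Longrightarrow> b \<in> J \<Longrightarrow> z \<in> P \<Longrightarrow> fst a < fst z \<Longrightarrow> fst z < fst b \<Longrightarrow> z \<in> J"
    using assms(1) unfolding IC_def interval_closed_ordsum_iff by blast+
  show "interval_closed P ordsum_le (insert x J)"
    unfolding interval_closed_ordsum_iff
  proof (intro conjI ballI impI)
    show "insert x J \<subseteq> P"
      using \<open>x \<in> P\<close> JP by blast
    fix a b z
    assume a: "a \<in> insert x J" and b: "b \<in> insert x J" and "z \<in> P"
      and between: "fst a < fst z \<and> fst z < fst b"
    consider "a = x" "b \<in> J" | "b = x" "a \<in> J" | "a \<in> J" "b \<in> J"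
      using a b between by auto
    then show "z \<in> insert x J"
      using added[of b z] added[of a z] J_closed[of a b z] \<open>z \<in> P\<close> between by cases auto
  qed
qed

lemma mem_toggle_ordsum_iff:
  assumes "J \<in> IC P ordsum_le" and "x \<in> P"
  shows "x \<in> toggle P ordsum_le x J \<longleftrightarrow> in_after_toggle P J x"
proof (cases "x \<in> J")
  case True
  then have "J - {x} \<union> ({x} - J) = J - {x}"
    by auto
  then show ?thesis
    using True interval_closed_remove_iff[OF assms(1) True assms(2)] by (auto simp: toggle_def Let_def)
next
  case False
  then have "J - {x} \<union> ({x} - J) = insert x J"
    by auto
  then show ?thesis
    using False interval_closed_insert_iff[OF assms(1) False assms(2)] by (auto simp: toggle_def Let_def)
qed

lemma in_after_toggle_cong:
  assumes "x \<in> J \<longleftrightarrow> x \<in> J'" and "\<And>y. fst y \<noteq> fst x \<Longrightarrow> y \<in> J \<longleftrightarrow> y \<in> J'"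
  shows "in_after_toggle P J x = in_after_toggle P J' x"
proof -
  have "\<And>y. fst y < fst x \<or> fst x < fst y \<Longrightarrow> y \<in> J \<longleftrightarrow> y \<in> J'"
    using assms(2) by fastforce
  then show ?thesis
    unfolding in_after_toggle_def using assms(1) by (smt (verit) less_trans)
qed

text \<open>When x is toggled, the elements of higher rank have already been toggled and those of
  lower rank have not; the other elements of its own rank do not influence the toggle of x.\<close>
definition rowmotion_recursion :: "(nat \<times> nat) set \<Rightarrow> (nat \<times> nat) set \<Rightarrow> (nat \<times> nat) set \<Rightarrow> bool" where
  "rowmotion_recursion P I R \<longleftrightarrow>
     (\<forall>x\<in>P. x \<in> R \<longleftrightarrow> in_after_toggle P ({y\<in>R. fst x < fst y} \<union> {y\<in>I. fst y \<le> fst x}) x)"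

lemma linear_extension_ordsum_index_less:
  assumes "linear_extension P ordsum_le xs" "i < length xs" "k < length xs"
    and "fst (xs ! i) < fst (xs ! k)"
  shows "i < k"
proof -
  have "i \<le> k"
    using assms unfolding linear_extension_def ordsum_le_def by blast
  moreover have "i \<noteq> k"
    using assms(4) by auto
  ultimately show ?thesis
    by simp
qed

lemma rowmotion_recursion_rowmotion:
  assumes le: "linear_extension P ordsum_le xs" and I: "I \<in> IC P ordsum_le"
  shows "rowmotion_recursion P I (rowmotion P ordsum_le xs I)"
  unfolding rowmotion_recursion_def
proof
  fix x assume "x \<in> P"
  have dist: "distinct xs" and set_xs: "set xs = P"
    using le unfolding linear_extension_def by auto
  obtain i where i: "i < length xs" "x = xs ! i"
    using \<open>x \<in> P\<close> set_xs by (metis in_set_conv_nth)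
  define R where "R k = foldr (toggle P ordsum_le) (drop k xs) I" for k
  have R_IC: "R k \<in> IC P ordsum_le" for k
    unfolding R_def using I by (rule foldr_toggle_in_IC)
  have R_sub: "R k \<subseteq> P" and I_sub: "I \<subseteq> P" for k
    using R_IC I unfolding IC_def interval_closed_def by blast+
  have mem_R: "xs ! j \<in> R k \<longleftrightarrow> xs ! j \<in> (if j < k then I else R j)" if "j < length xs" for j k
    unfolding R_def using mem_foldr_toggle_drop[OF dist that] .
  have R_0: "R 0 = rowmotion P ordsum_le xs I"
    by (simp add: R_def rowmotion_eq_foldr)
  let ?H = "{y \<in> R 0. fst x < fst y} \<union> {y\<in>I. fst y \<le> fst x}"
  have "x \<in> R 0 \<longleftrightarrow> x \<in> toggle P ordsum_le x (R (Suc i))"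
    using mem_R[OF i(1), of 0] i by (simp add: R_def Cons_nth_drop_Suc[symmetric])
  also have "\<dots> \<longleftrightarrow> in_after_toggle P (R (Suc i)) x"
    using R_IC \<open>x \<in> P\<close> by (rule mem_toggle_ordsum_iff)
  also have "\<dots> \<longleftrightarrow> in_after_toggle P ?H x"
  proof (rule in_after_toggle_cong)
    show "x \<in> R (Suc i) \<longleftrightarrow> x \<in> ?H"
      using mem_R[OF i(1), of "Suc i"] i by simp
  next
    fix y :: "nat \<times> nat" assume "fst y \<noteq> fst x"
    show "y \<in> R (Suc i) \<longleftrightarrow> y \<in> ?H"
    proof (cases "y \<in> P")
      case False
      then show ?thesis
        using R_sub I_sub by blast
    next
      case True
      then obtain k where k: "k < length xs" "y = xs ! k"
        using set_xs by (metis in_set_conv_nth)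
      consider "fst x < fst y" "i < k" | "fst y < fst x" "k < i"
        using linear_extension_ordsum_index_less[OF le] i k \<open>fst y \<noteq> fst x\<close>
        by (metis linorder_neqE_nat)
      then show ?thesis
        using mem_R[OF k(1), of "Suc i"] mem_R[OF k(1), of 0] k by cases auto
    qed
  qed
  finally show "x \<in> rowmotion P ordsum_le xs I \<longleftrightarrow>
      in_after_toggle P ({y \<in> rowmotion P ordsum_le xs I. fst x < fst y} \<union> {y\<in>I. fst y \<le> fst x}) x"
    unfolding R_0 .
qed

lemma rowmotion_recursion_unique:
  assumes "finite P" "R \<subseteq> P" "R' \<subseteq> P"
    and "rowmotion_recursion P I R" "rowmotion_recursion P I R'"
  shows "R = R'"
proof -
  obtain n where bound: "\<And>x. x \<in> P \<Longrightarrow> fst x < n"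
    using finite_imageI[OF assms(1), of fst] by (auto simp: finite_nat_set_iff_bounded)
  have "x \<in> P \<Longrightarrow> x \<in> R \<longleftrightarrow> x \<in> R'" for x
  proof (induction "n - fst x" arbitrary: x rule: less_induct)
    case less
    have "y \<in> R \<longleftrightarrow> y \<in> R'" if "fst x < fst y" "y \<in> P" for y
      using less.hyps[of y] that bound[of y] by (simp add: diff_less_mono2)
    then have "{y\<in>R. fst x < fst y} = {y\<in>R'. fst x < fst y}"
      using assms(2,3) by blast
    then show ?case
      using assms(4,5) less.prems unfolding rowmotion_recursion_def by simp
  qed
  then show ?thesis
    using assms(2,3) by blast
qed

lemma rowmotion_eqI:
  assumes "linear_extension P ordsum_le xs" "I \<in> IC P ordsum_le"
    and "F \<subseteq> P" "rowmotion_recursion P I F"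
  shows "rowmotion P ordsum_le xs I = F"
proof (rule rowmotion_recursion_unique)
  show "finite P"
    using assms(1) unfolding linear_extension_def by auto
  show "rowmotion P ordsum_le xs I \<subseteq> P"
    using foldr_toggle_in_IC[OF assms(2)] unfolding rowmotion_eq_foldr IC_def interval_closed_def by blast
qed (use assms rowmotion_recursion_rowmotion in auto)

lemma rowmotion_recursion_top_segment:
  assumes I_above: "\<And>z. z \<in> I \<Longrightarrow> lo \<le> fst z"
    and I_full: "\<And>z. z \<in> P \<Longrightarrow> lo < fst z \<Longrightarrow> z \<in> I"
  defines "F \<equiv> {z\<in>P. fst z < lo \<or> fst z = lo \<and> z \<notin> I}"
  shows "rowmotion_recursion P I F"
  unfolding rowmotion_recursion_def
proof
  fix x assume "x \<in> P"
  define H where "H = {y\<in>F. fst x < fst y} \<union> {y\<in>I. fst y \<le> fst x}"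
  have mem_F: "y \<in> F \<longleftrightarrow> y \<in> P \<and> (fst y < lo \<or> fst y = lo \<and> y \<notin> I)" for y
    by (simp add: F_def)
  have mem_H: "y \<in> H \<longleftrightarrow> y \<in> F \<and> fst x < fst y \<or> y \<in> I \<and> fst y \<le> fst x" for y
    by (simp add: H_def)
  have F_below: "fst y \<le> lo" if "y \<in> F" for y
    using that by (auto simp: mem_F)
  consider (above) "lo < fst x" | (bottom_in) "fst x = lo" "x \<in> I" | (bottom_out) "fst x = lo" "x \<notin> I"
    | (below) "fst x < lo"
    by linarith
  then show "x \<in> F \<longleftrightarrow> in_after_toggle P H x"
  proof cases
    case above
    then have "x \<in> H" "x \<notin> F"
      using I_full[of x] \<open>x \<in> P\<close> F_below[of x] by (auto simp: mem_H)
    moreover have "fst b \<le> fst x" if "b \<in> H" for b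
      using that above F_below[of b] by (auto simp: mem_H)
    ultimately show ?thesis
      using not_in_after_toggle_extremal by blast
  next
    case bottom_in
    then have "x \<in> H" "x \<notin> F"
      by (auto simp: mem_H mem_F)
    moreover have "fst x \<le> fst a" if "a \<in> H" for a
      using that bottom_in I_above[of a] by (auto simp: mem_H)
    ultimately show ?thesis
      using not_in_after_toggle_extremal by blast
  next
    case bottom_out
    then have "x \<notin> H" "x \<in> F"
      using \<open>x \<in> P\<close> by (auto simp: mem_H mem_F)
    moreover have "fst b = fst x" if "b \<in> H" for b
      using that bottom_out I_above[of b] F_below[of b] by (auto simp: mem_H)
    ultimately show ?thesis
      by (auto simp: in_after_toggle_nonmem_iff)
  next
    case below
    then have "x \<notin> H" "x \<in> F"
      using \<open>x \<in> P\<close> I_above[of x] by (auto simp: mem_H mem_F)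
    moreover have "z \<in> H" if "b \<in> H" "z \<in> P"
      "fst x < fst z \<and> fst z < fst b \<or> fst b < fst z \<and> fst z < fst x" for b z
      using that below I_above[of b] F_below[of b] by (auto simp: mem_H mem_F)
    ultimately show ?thesis
      by (simp add: in_after_toggle_nonmem_iff)
  qed
qed

lemma rowmotion_recursion_band:
  assumes I_sub: "I \<subseteq> P" and "a \<in> I" "fst a = lo" and "c \<in> P" "fst c = t" "c \<notin> I" and "lo < t"
    and I_between: "\<And>z. z \<in> I \<Longrightarrow> lo \<le> fst z \<and> fst z \<le> t"
    and I_full: "\<And>z. z \<in> P \<Longrightarrow> lo < fst z \<Longrightarrow> fst z < t \<Longrightarrow> z \<in> I"
  defines "F \<equiv> {z\<in>P. lo \<le> fst z \<and> fst z \<le> t \<and> z \<notin> I \<or> lo < fst z \<and> fst z < t}"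
  shows "rowmotion_recursion P I F"
  unfolding rowmotion_recursion_def
proof
  fix x assume "x \<in> P"
  define H where "H = {y\<in>F. fst x < fst y} \<union> {y\<in>I. fst y \<le> fst x}"
  have mem_F: "y \<in> F \<longleftrightarrow> y \<in> P \<and> (lo \<le> fst y \<and> fst y \<le> t \<and> y \<notin> I \<or> lo < fst y \<and> fst y < t)" for y
    by (simp add: F_def)
  have mem_H: "y \<in> H \<longleftrightarrow> y \<in> F \<and> fst x < fst y \<or> y \<in> I \<and> fst y \<le> fst x" for y
    by (simp add: H_def)
  have H_between: "lo \<le> fst y \<and> fst y \<le> t" if "y \<in> H" for y
    using that I_between[of y] by (auto simp: mem_H mem_F)
  have "a \<in> P"
    using \<open>a \<in> I\<close> I_sub by blast
  consider (above) "t < fst x" | (below) "fst x < lo" | (middle) "lo < fst x" "fst x < t"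
    | (boundary_in) "fst x = lo \<or> fst x = t" "x \<in> I" | (boundary_out) "fst x = lo \<or> fst x = t" "x \<notin> I"
    by linarith
  then show "x \<in> F \<longleftrightarrow> in_after_toggle P H x"
  proof cases
    case above
    then have "x \<notin> I"
      using I_between[of x] by (meson not_le)
    then have "x \<notin> H" "x \<notin> F" "a \<in> H" "c \<notin> H"
      using above \<open>a \<in> I\<close> \<open>fst a = lo\<close> \<open>fst c = t\<close> \<open>c \<notin> I\<close> \<open>lo < t\<close> by (auto simp: mem_H mem_F)
    moreover have "fst a < fst c" "fst c < fst x"
      using above \<open>fst a = lo\<close> \<open>fst c = t\<close> \<open>lo < t\<close> by auto
    ultimately show ?thesis
      using not_in_after_toggle_gap[of x H a c P] \<open>c \<in> P\<close> by blast
  next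
    case below
    then have "x \<notin> I"
      using I_between[of x] by (meson not_le)
    then have "x \<notin> H" "x \<notin> F" "c \<in> H" "a \<notin> H"
      using below \<open>a \<in> I\<close> \<open>fst a = lo\<close> \<open>c \<in> P\<close> \<open>fst c = t\<close> \<open>c \<notin> I\<close> \<open>lo < t\<close>
      by (auto simp: mem_H mem_F)
    moreover have "fst x < fst a" "fst a < fst c"
      using below \<open>fst a = lo\<close> \<open>fst c = t\<close> \<open>lo < t\<close> by auto
    ultimately show ?thesis
      using not_in_after_toggle_gap[of x H c a P] \<open>a \<in> P\<close> by blast
  next
    case middle
    then have "x \<in> H" "x \<in> F" "a \<in> H" "c \<in> H" "fst a < fst x" "fst x < fst c"
      using I_full[of x] \<open>x \<in> P\<close> \<open>a \<in> I\<close> \<open>fst a = lo\<close> \<open>c \<in> P\<close> \<open>fst c = t\<close> \<open>c \<notin> I\<close>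
      by (auto simp: mem_H mem_F)
    then show ?thesis
      by (auto simp: in_after_toggle_mem_iff)
  next
    case boundary_in
    then have "x \<in> H" "x \<notin> F"
      using \<open>lo < t\<close> by (auto simp: mem_H mem_F)
    moreover have "(\<forall>b\<in>H. fst b \<le> fst x) \<or> (\<forall>b\<in>H. fst x \<le> fst b)"
      using boundary_in H_between by auto
    ultimately show ?thesis
      using not_in_after_toggle_extremal by blast
  next
    case boundary_out
    then have "x \<notin> H" "x \<in> F"
      using \<open>x \<in> P\<close> \<open>lo < t\<close> by (auto simp: mem_H mem_F)
    moreover have "z \<in> H" if "b \<in> H" "z \<in> P"
      "fst x < fst z \<and> fst z < fst b \<or> fst b < fst z \<and> fst z < fst x" for b z
    proof -
      have "lo < fst z" "fst z < t"
        using that(3) boundary_out(1) H_between[OF that(1)] by auto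
      then have "z \<in> I" "z \<in> F"
        using that(2) I_full[of z] by (auto simp: mem_F)
      then show "z \<in> H"
        by (auto simp: mem_H)
    qed
    ultimately show ?thesis
      by (simp add: in_after_toggle_nonmem_iff)
  qed
qed

lemma rowmotion_top_segment:
  assumes "linear_extension P ordsum_le xs" "I \<in> IC P ordsum_le"
    and "\<And>z. z \<in> I \<Longrightarrow> lo \<le> fst z" "\<And>z. z \<in> P \<Longrightarrow> lo < fst z \<Longrightarrow> z \<in> I"
  shows "rowmotion P ordsum_le xs I = {z\<in>P. fst z < lo \<or> fst z = lo \<and> z \<notin> I}"
  using rowmotion_recursion_top_segment[OF assms(3,4)] by (intro rowmotion_eqI[OF assms(1,2)]) auto

lemma rowmotion_band:
  assumes "linear_extension P ordsum_le xs" "I \<in> IC P ordsum_le"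
    and "a \<in> I" "fst a = lo" and "c \<in> P" "fst c = t" "c \<notin> I" and "lo < t"
    and "\<And>z. z \<in> I \<Longrightarrow> lo \<le> fst z \<and> fst z \<le> t"
    and "\<And>z. z \<in> P \<Longrightarrow> lo < fst z \<Longrightarrow> fst z < t \<Longrightarrow> z \<in> I"
  shows "rowmotion P ordsum_le xs I = {z\<in>P. lo \<le> fst z \<and> fst z \<le> t \<and> z \<notin> I \<or> lo < fst z \<and> fst z < t}"
proof -
  have "I \<subseteq> P"
    using assms(2) by (simp add: IC_def interval_closed_def)
  then show ?thesis
    using rowmotion_recursion_band[OF _ assms(3-10)] by (intro rowmotion_eqI[OF assms(1,2)]) auto
qed

lemma SC_union_inter: "finite A \<Longrightarrow> finite B \<Longrightarrow> SC A + SC B = SC (A \<union> B) + SC (A \<inter> B)"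
  unfolding SC_def by (simp add: sum.union_inter)

lemma SC_ranks:
  "SC {z \<in> ordsum_antichains n m. fst z \<in> R} = int m * (\<Sum>r\<in>R \<inter> {..<n}. (-1) ^ r)"
proof -
  have "{z \<in> ordsum_antichains n m. fst z \<in> R} = (R \<inter> {..<n}) \<times> {..<m}"
    by (auto simp: ordsum_antichains_def)
  moreover have "SC_elem z = (-1) ^ fst z" for z
    by (simp add: SC_elem_def rk_def)
  moreover have "(\<Sum>z\<in>A \<times> {..<m}. (-1::int) ^ fst z) = (\<Sum>r\<in>A. \<Sum>j<m. (-1) ^ r)" for A
    unfolding sum.cartesian_product by (simp add: case_prod_beta)
  ultimately show ?thesis
    by (simp add: SC_def sum_distrib_left)
qed

lemma sum_neg_one_power_even: "even n \<Longrightarrow> (\<Sum>r<n. (-1::int) ^ r) = 0"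
  by (induction n rule: nat_induct2) auto

lemma sum_neg_one_power_band:
  assumes "lo < t"
  shows "(\<Sum>r\<in>{lo..t}. (-1::int) ^ r) + (\<Sum>r\<in>{lo<..<t}. (-1) ^ r) = 0"
proof -
  obtain k where "t = Suc (lo + k)"
    using assms less_imp_Suc_add by blast
  moreover have "(\<Sum>r\<in>{lo..Suc (lo + k)}. (-1::int) ^ r) + (\<Sum>r\<in>{lo<..<Suc (lo + k)}. (-1) ^ r) = 0"
    by (induction k) (simp_all add: atLeastSucLessThan_greaterThanLessThan[symmetric])
  ultimately show ?thesis
    by simp
qed

lemma finite_ordsum_antichains: "finite (ordsum_antichains n m)"
  by (simp add: ordsum_antichains_def)

lemma SC_top_segment:
  assumes "even n" and I_sub: "I \<subseteq> ordsum_antichains n m"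
    and I_above: "\<And>z. z \<in> I \<Longrightarrow> lo \<le> fst z"
    and I_full: "\<And>z. z \<in> ordsum_antichains n m \<Longrightarrow> lo < fst z \<Longrightarrow> z \<in> I"
  shows "SC {z \<in> ordsum_antichains n m. fst z < lo \<or> fst z = lo \<and> z \<notin> I} + SC I = 0"
    (is "SC ?F + SC I = 0")
proof -
  have "?F \<union> I = {z \<in> ordsum_antichains n m. fst z \<in> UNIV}"
    using I_sub I_full by (auto simp: not_less_iff_gr_or_eq)
  moreover have "?F \<inter> I = {}"
    using I_above by fastforce
  ultimately have "SC ?F + SC I = SC {z \<in> ordsum_antichains n m. fst z \<in> UNIV}"
    using SC_union_inter[of ?F I] finite_subset[OF I_sub] finite_ordsum_antichains
    by (simp add: SC_def)
  also have "\<dots> = 0"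
    unfolding SC_ranks using sum_neg_one_power_even[OF \<open>even n\<close>] by simp
  finally show ?thesis .
qed

lemma SC_band:
  assumes "lo < t" "t < n" and I_sub: "I \<subseteq> ordsum_antichains n m"
    and I_between: "\<And>z. z \<in> I \<Longrightarrow> lo \<le> fst z \<and> fst z \<le> t"
    and I_full: "\<And>z. z \<in> ordsum_antichains n m \<Longrightarrow> lo < fst z \<Longrightarrow> fst z < t \<Longrightarrow> z \<in> I"
  shows "SC {z \<in> ordsum_antichains n m. lo \<le> fst z \<and> fst z \<le> t \<and> z \<notin> I \<or> lo < fst z \<and> fst z < t}
    + SC I = 0"
    (is "SC ?F + SC I = 0")
proof -
  have "?F \<union> I = {z \<in> ordsum_antichains n m. fst z \<in> {lo..t}}"
    using I_sub I_between by auto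
  moreover have "?F \<inter> I = {z \<in> ordsum_antichains n m. fst z \<in> {lo<..<t}}"
    using I_full by auto
  ultimately have "SC ?F + SC I =
      SC {z \<in> ordsum_antichains n m. fst z \<in> {lo..t}} + SC {z \<in> ordsum_antichains n m. fst z \<in> {lo<..<t}}"
    using SC_union_inter[of ?F I] finite_subset[OF I_sub] finite_ordsum_antichains by simp
  also have "\<dots> = int m * ((\<Sum>r\<in>{lo..t}. (-1) ^ r) + (\<Sum>r\<in>{lo<..<t}. (-1) ^ r))"
    unfolding SC_ranks distrib_left using \<open>t < n\<close> by (simp add: Int_absorb2 subset_eq)
  also have "\<dots> = 0"
    using sum_neg_one_power_band[OF \<open>lo < t\<close>] by simp
  finally show ?thesis .
qed

lemma mem_ordsum_antichains: "z \<in> ordsum_antichains n m \<longleftrightarrow> fst z < n \<and> snd z < m"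
  by (cases z) (simp add: ordsum_antichains_def)

lemma SC_rowmotion:
  assumes le: "linear_extension (ordsum_antichains n m) ordsum_le xs" and "even n"
    and I: "I \<in> IC (ordsum_antichains n m) ordsum_le"
  shows "SC (rowmotion (ordsum_antichains n m) ordsum_le xs I) = - SC I"
proof -
  let ?P = "ordsum_antichains n m"
  let ?R = "rowmotion ?P ordsum_le xs I"
  have I_sub: "I \<subseteq> ?P"
    and I_closed: "\<And>a b z. a \<in> I \<Longrightarrow> b \<in> I \<Longrightarrow> z \<in> ?P \<Longrightarrow> fst a < fst z \<Longrightarrow> fst z < fst b \<Longrightarrow> z \<in> I"
    using I unfolding IC_def interval_closed_ordsum_iff by blast+
  have top_segment: "SC ?R = - SC I"
    if "\<And>z. z \<in> I \<Longrightarrow> lo \<le> fst z" "\<And>z. z \<in> ?P \<Longrightarrow> lo < fst z \<Longrightarrow> z \<in> I" for lo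
    using rowmotion_top_segment[OF le I that] SC_top_segment[OF \<open>even n\<close> I_sub that] by simp
  have band: "SC ?R = - SC I"
    if "a \<in> I" "fst a = lo" "c \<in> ?P" "fst c = t" "c \<notin> I" "lo < t" "t < n"
      "\<And>z. z \<in> I \<Longrightarrow> lo \<le> fst z \<and> fst z \<le> t" "\<And>z. z \<in> ?P \<Longrightarrow> lo < fst z \<Longrightarrow> fst z < t \<Longrightarrow> z \<in> I"
    for a c lo t
    using rowmotion_band[OF le I that(1-6,8,9)] SC_band[OF that(6,7) I_sub that(8,9)] by simp
  show ?thesis
  proof (cases "I = {}")
    case True
    then show ?thesis
      using top_segment[of n] by (simp add: mem_ordsum_antichains)
  next
    case False
    have "finite I"
      using I_sub finite_ordsum_antichains finite_subset by blast
    define lo where "lo = Min (fst ` I)"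
    define hi where "hi = Max (fst ` I)"
    have "lo \<in> fst ` I" "hi \<in> fst ` I"
      unfolding lo_def hi_def using \<open>finite I\<close> False by simp_all
    then obtain a b where a: "a \<in> I" "fst a = lo" and b: "b \<in> I" "fst b = hi"
      by blast
    have between: "lo \<le> fst z \<and> fst z \<le> hi" if "z \<in> I" for z
      using that \<open>finite I\<close> unfolding lo_def hi_def by simp
    have inner: "z \<in> I" if "z \<in> ?P" "lo < fst z" "fst z < hi" for z
      using I_closed[OF a(1) b(1) that(1)] a b that by simp
    have "hi < n" "0 < m"
      using b I_sub by (auto simp: mem_ordsum_antichains)
    consider c where "c \<in> ?P" "lo < fst c" "fst c \<le> hi" "c \<notin> I"
      | "\<And>z. z \<in> ?P \<Longrightarrow> lo < fst z \<Longrightarrow> fst z \<le> hi \<Longrightarrow> z \<in> I" "Suc hi < n"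
      | "\<And>z. z \<in> ?P \<Longrightarrow> lo < fst z \<Longrightarrow> fst z \<le> hi \<Longrightarrow> z \<in> I" "Suc hi = n"
      using \<open>hi < n\<close> by (metis Suc_lessI)
    then show ?thesis
    proof cases
      case 1
      then have "fst c = hi"
        using inner[of c] by fastforce
      then show ?thesis
        using band[OF a 1(1) _ 1(4)] 1 between inner \<open>hi < n\<close> by simp
    next
      case 2
      have c: "(Suc hi, 0) \<in> ?P" "(Suc hi, 0) \<notin> I"
        using 2 \<open>0 < m\<close> between[of "(Suc hi, 0)"] by (auto simp: mem_ordsum_antichains)
      have "lo < Suc hi"
        using between[OF a(1)] a by simp
      moreover have "fst z \<le> Suc hi" if "z \<in> I" for z
        using between[OF that] by simp
      ultimately show ?thesis
        using band[OF a c(1) _ c(2)] 2 between by (simp add: less_Suc_eq_le)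
    next
      case 3
      then show ?thesis
        using top_segment[of lo] between by (simp add: mem_ordsum_antichains less_Suc_eq_le)
    qed
  qed
qed

theorem theorem3p18:
  fixes m n :: nat and xs :: "(nat \<times> nat) list"
  assumes "m \<ge> 1" and "even n"
    and "linear_extension (ordsum_antichains n m) ordsum_le xs"
  shows "homomesic (IC (ordsum_antichains n m) ordsum_le)
           (rowmotion (ordsum_antichains n m) ordsum_le xs)
           (\<lambda>I. real_of_int (SC I)) 0"
proof (rule homomesic_0_if_sign_reversing)
  show "finite (IC (ordsum_antichains n m) ordsum_le)"
    using finite_ordsum_antichains
    by (rule finite_subset[rotated, OF finite_Pow_iff[THEN iffD2]]) (auto simp: IC_def interval_closed_def)
  show "rowmotion (ordsum_antichains n m) ordsum_le xs ` IC (ordsum_antichains n m) ordsum_le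
      \<subseteq> IC (ordsum_antichains n m) ordsum_le"
    by (auto simp: rowmotion_eq_foldr intro: foldr_toggle_in_IC)
  show "inj_on (rowmotion (ordsum_antichains n m) ordsum_le xs) (IC (ordsum_antichains n m) ordsum_le)"
    unfolding rowmotion_eq_foldr[abs_def] by (rule inj_on_foldr_toggle)
qed (use SC_rowmotion assms(2,3) in simp)

end
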